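(* For any function $f:N\to L$ and any $L^+$-valued fuzzy measure $v$ on $N$, \[ \check{\mathcal{S}}_v(f) = \left[\mathop{\mathrm{SMax}}_{i=1}^p \left(f_{(i)}\mathbin{\mathrm{smin}} v(\{(1),\ldots,(i)\})\right)\right] \mathbin{\mathrm{smax}} \left[\mathop{\mathrm{SMax}}_{i=p+1}^n \left(f_{(i)}\mathbin{\mathrm{smin}} v(\{(i),\ldots,(n)\})\right)\right], \] where $(\cdot)$ is a permutation of $N$ such that $-\mathbf{1}\leq f_{(1)}\leq\cdots\leq f_{(p)}<\mathbf{0}\leq f_{(p+1)}\leq\cdots\leq f_{(n)}\leq \mathbf{1}$. Moreover, \begin{align*} \check{\mathcal{S}}_v(f) = & \left[\mathop{\mathrm{SMax}}_{A\subset N^+}\left(m(A) \mathbin{\mathrm{smin}}\Bigg[\bigwedge_{i\in A}f_i^+ \mathbin{\mathrm{smax}}\Big(- \bigwedge_{i\in A}f_i^-\Big) \Bigg] \right)\right]\mathbin{\mathrm{smax}}\\ & \left[\mathop{\mathrm{SMax}}_{A\subset N^-}\left(m(A) \mathbin{\mathrm{smin}}\Bigg[\bigwedge_{i\in A}f_i^+ \mathbin{\mathrm{smax}}\Big(- \bigwedge_{i\in A}f_i^-\Big) \Bigg] \right)\right]\mathbin{\mathrm{smax}}\\ & \left[\mathop{\mathrm{SMax}}_{A^+,A^-\neq\emptyset}\left(m(A) \mathbin{\mathrm{smin}}\Bigg[\bigwedge_{i\in A}f_i^+ \mathbin{\mathrm{smax}}\Big(- \bigwedge_{i\in A}f_i^-\Big)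 \Bigg] \right)\right], \end{align*} where $N^+:=\{i\in N\mid f_i\geq\mathbf{0}\}$, $N^-:=N\setminus N^+$, $A^+:=A\cap N^+$, $A^-:=A\cap N^-$, and $m$ is any function in the interval $[m_*,m^*]$ of Möbius transforms of $v$.
   Context: $L^+$ is a linearly ordered set with bottom $\mathbf{0}$ and top $\mathbf{1}$; $L^-:=\{-a\mid a\in L^+\}$ with reversed order ($-a\leq -b$ iff $a\geq b$), and $L:=L^+\cup L^-$ with $-\mathbf{0}$ identified with $\mathbf{0}$. $|a|=a$ if $a\in L^+$, $|a|=-a$ otherwise; $\mathrm{sign}$ takes values $-\mathbf{1},\mathbf{0},\mathbf{1}$ for $a<\mathbf{0}$, $a=\mathbf{0}$, $a>\mathbf{0}$. The symmetric maximum is $a\mathbin{\mathrm{smax}} b := -(|a|\vee|b|)$ if $b\neq -a$ and $|a|\vee|b|$ equals $-a$ or $-b$; $:=\mathbf{0}$ if $b=-a$; $:=|a|\vee|b|$ otherwise. The symmetric minimum is $a\mathbin{\mathrm{smin}} b := -(|a|\wedge|b|)$ if $\mathrm{sign}\,a\neq\mathrm{sign}\,b$, and $|a|\wedge|b|$ otherwise. $\mathop{\mathrm{SMax}}$ denotes the iterated symmetric maximum; it is unambiguous (associative) whenever all terms have the same sign, which is the case within each bracket above. $N=\{1,\ldots,n\}$; an $L^+$-valued fuzzy measure $v:\mathcal{P}(N)\to L^+$ satisfies $v(\emptyset)=\mathbf{0}$, $v(N)=\mathbf{1}$, and is monotone. The Sugeno integral of $g:N\to L^+$ is $\mathcal{S}_v(g)=\bigvee_{i=1}^n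 [g_{(i)}\wedge v(\{(i),\ldots,(n)\})]$ with $g_{(1)}\leq\cdots\leq g_{(n)}$. For $f:N\to L$, $f^+:=f\vee\mathbf{0}$, $f^-:=(-f)\vee\mathbf{0}$, and the symmetric Sugeno integral is defined by $\check{\mathcal{S}}_v(f)=\mathcal{S}_v(f^+)\mathbin{\mathrm{smax}}(-\mathcal{S}_v(f^-))$. The (ordinal) Möbius transforms of $v$ are the functions $m$ with $m_*\leq m\leq m^*$, where $m^*(A)=v(A)$ and $m_*(A)=v(A)$ if $v(A)>v(A\setminus\{j\})$ for all $j\in A$, and $m_*(A)=\mathbf{0}$ otherwise; for any such $m$, $\mathcal{S}_v(g)=\bigvee_{A\subset N}\big(\bigwedge_{i\in A}g_i\wedge m(A)\big)$. *)

theory Defs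
  imports Main
begin

text \<open>An element of L is a pair (b, a): b = True means the element a of L+,
  b = False means -a (with a \<noteq> 0).  The invariant identifies -0 with 0.\<close>

typedef (overloaded) ('a::"{linorder,order_bot,order_top}") symL =
  "{p :: bool \<times> 'a. fst p \<or> snd p \<noteq> bot}"
  morphisms rep_symL Abs_symL
  by (rule exI[of _ "(True, bot)"]) simp

definition posL :: "'a::{linorder,order_bot,order_top} \<Rightarrow> 'a symL" where
  "posL a = Abs_symL (True, a)"

definition zeroL :: "'a::{linorder,order_bot,order_top} symL" where
  "zeroL = posL bot"

definition oneL :: "'a::{linorder,order_bot,order_top} symL" where
  "oneL = posL top"

definition magn :: "'a::{linorder,order_bot,order_top} symL \<Rightarrow> 'a" where
  "magn x = snd (rep_symL x)"

definition isNeg :: "'a::{linorder,order_bot,order_top} symL \<Rightarrow> bool" where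
  "isNeg x = (\<not> fst (rep_symL x))"

definition negL :: "'a::{linorder,order_bot,order_top} symL \<Rightarrow> 'a symL" where
  "negL x = (if magn x = bot then x else Abs_symL (\<not> fst (rep_symL x), magn x))"

definition absL :: "'a::{linorder,order_bot,order_top} symL \<Rightarrow> 'a symL" where
  "absL x = posL (magn x)"

definition leL :: "'a::{linorder,order_bot,order_top} symL \<Rightarrow> 'a symL \<Rightarrow> bool" where
  "leL x y = (if isNeg x then (if isNeg y then magn y \<le> magn x else True)
              else (\<not> isNeg y \<and> magn x \<le> magn y))"

definition lessL :: "'a::{linorder,order_bot,order_top} symL \<Rightarrow> 'a symL \<Rightarrow> bool" where
  "lessL x y = (leL x y \<and> x \<noteq> y)"

definition signL :: "'a::{linorder,order_bot,order_top} symL \<Rightarrow> 'a symL" where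
  "signL x = (if lessL x zeroL then negL oneL else if x = zeroL then zeroL else oneL)"

definition smaxL :: "'a::{linorder,order_bot,order_top} symL \<Rightarrow> 'a symL \<Rightarrow> 'a symL" where
  "smaxL a b =
     (if b = negL a then zeroL
      else if posL (max (magn a) (magn b)) = negL a \<or> posL (max (magn a) (magn b)) = negL b
      then negL (posL (max (magn a) (magn b)))
      else posL (max (magn a) (magn b)))"

definition sminL :: "'a::{linorder,order_bot,order_top} symL \<Rightarrow> 'a symL \<Rightarrow> 'a symL" where
  "sminL a b =
     (if signL a \<noteq> signL b then negL (posL (min (magn a) (magn b)))
      else posL (min (magn a) (magn b)))"

text \<open>Iterated symmetric maximum of a list (empty = 0, the neutral element),
  and over a finite index set (in some enumeration; unambiguous when all
  terms have the same sign).\<close>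
definition SMaxL :: "'a::{linorder,order_bot,order_top} symL list \<Rightarrow> 'a symL" where
  "SMaxL xs = foldr smaxL xs zeroL"

definition SMaxSet :: "('b \<Rightarrow> 'a::{linorder,order_bot,order_top} symL) \<Rightarrow> 'b set \<Rightarrow> 'a symL" where
  "SMaxSet g S = SMaxL (map g (SOME xs. distinct xs \<and> set xs = S))"

definition bigjoin :: "('b \<Rightarrow> 'a::{linorder,order_bot,order_top}) \<Rightarrow> 'b set \<Rightarrow> 'a" where
  "bigjoin g A = (if A = {} then bot else Max (g ` A))"

definition bigmeet :: "('b \<Rightarrow> 'a::{linorder,order_bot,order_top}) \<Rightarrow> 'b set \<Rightarrow> 'a" where
  "bigmeet g A = (if A = {} then top else Min (g ` A))"

definition fuzzy_measure :: "nat \<Rightarrow> (nat set \<Rightarrow> 'a::{linorder,order_bot,order_top}) \<Rightarrow> bool" where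
  "fuzzy_measure n v \<longleftrightarrow> v {} = bot \<and> v {1..n} = top \<and>
     (\<forall>A B. A \<subseteq> B \<and> B \<subseteq> {1..n} \<longrightarrow> v A \<le> v B)"

definition sugeno :: "nat \<Rightarrow> (nat set \<Rightarrow> 'a::{linorder,order_bot,order_top}) \<Rightarrow> (nat \<Rightarrow> 'a) \<Rightarrow> 'a" where
  "sugeno n v g =
     (let \<sigma> = (SOME \<sigma>. bij_betw \<sigma> {1..n} {1..n} \<and> (\<forall>i\<in>{1..<n}. g (\<sigma> i) \<le> g (\<sigma> (Suc i))))
      in bigjoin (\<lambda>i. min (g (\<sigma> i)) (v (\<sigma> ` {i..n}))) {1..n})"

definition posPart :: "'a::{linorder,order_bot,order_top} symL \<Rightarrow> 'a" where
  "posPart x = magn (if leL x zeroL then zeroL else x)"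

definition negPart :: "'a::{linorder,order_bot,order_top} symL \<Rightarrow> 'a" where
  "negPart x = magn (if leL (negL x) zeroL then zeroL else negL x)"

definition sym_sugeno :: "nat \<Rightarrow> (nat set \<Rightarrow> 'a::{linorder,order_bot,order_top}) \<Rightarrow> (nat \<Rightarrow> 'a symL) \<Rightarrow> 'a symL" where
  "sym_sugeno n v f =
     smaxL (posL (sugeno n v (\<lambda>i. posPart (f i)))) (negL (posL (sugeno n v (\<lambda>i. negPart (f i)))))"

definition mobius_upper :: "(nat set \<Rightarrow> 'a::{linorder,order_bot,order_top}) \<Rightarrow> nat set \<Rightarrow> 'a" where
  "mobius_upper v A = v A"

definition mobius_lower :: "(nat set \<Rightarrow> 'a::{linorder,order_bot,order_top}) \<Rightarrow> nat set \<Rightarrow> 'a" where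
  "mobius_lower v A = (if \<forall>j\<in>A. v A > v (A - {j}) then v A else bot)"

definition mobius_transform :: "nat \<Rightarrow> (nat set \<Rightarrow> 'a::{linorder,order_bot,order_top}) \<Rightarrow> (nat set \<Rightarrow> 'a) \<Rightarrow> bool" where
  "mobius_transform n v m \<longleftrightarrow>
     (\<forall>A. A \<subseteq> {1..n} \<longrightarrow> mobius_lower v A \<le> m A \<and> m A \<le> mobius_upper v A)"

end

theory Submission
  imports Defs
begin

text \<open>Every Sugeno integral equals \<open>\<Or>\<^sub>A (v(A) \<and> \<And>\<^sub>i\<^sub>\<in>\<^sub>A g\<^sub>i)\<close>, and any
  Moebius transform \<open>m\<close> may replace \<open>v\<close> there, because every \<open>A\<close> contains a \<open>C\<close> with
  \<open>v(C) = v(A)\<close> on which \<open>v\<close> drops strictly when any element is removed. The join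
  collapses onto any chain of sets \<open>B\<^sub>i \<ni> (i)\<close> on which \<open>g\<close> is minimal at \<open>(i)\<close>:
  for \<open>f\<^sup>+\<close> the chain \<open>{(i),\<dots>,(n)}\<close> and, since \<open>f\<^sup>-\<close> is sorted decreasingly,
  \<open>{(1),\<dots>,(i)}\<close> for \<open>f\<^sup>-\<close>. As \<open>f\<^sup>+\<close> vanishes on \<open>N\<^sup>-\<close> and \<open>f\<^sup>-\<close> on
  \<open>N\<^sup>+\<close>, each bracket of the claimed formulas has terms of a single sign, so its symmetric
  maximum is an ordinary join of magnitudes; the terms for sets meeting both \<open>N\<^sup>+\<close> and
  \<open>N\<^sup>-\<close> are \<open>0\<close>.\<close>

lemma rep_symL_posL [simp]: "rep_symL (posL a) = (True, a)"
  by (simp add: posL_def Abs_symL_inverse)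

lemma magn_posL [simp]: "magn (posL a) = a"
  by (simp add: magn_def)

lemma isNeg_posL [simp]: "\<not> isNeg (posL a)"
  by (simp add: isNeg_def)

lemma symL_eq_iff: "x = y \<longleftrightarrow> isNeg x = isNeg y \<and> magn x = magn y"
  using rep_symL_inject[of x y]
  by (cases "rep_symL x"; cases "rep_symL y") (auto simp: isNeg_def magn_def)

lemma isNeg_magn_not_bot: "isNeg x \<Longrightarrow> magn x \<noteq> bot"
  using rep_symL[of x] by (auto simp: isNeg_def magn_def)

lemma magn_negL [simp]: "magn (negL x) = magn x"
  using rep_symL[of x] by (auto simp: negL_def magn_def Abs_symL_inverse)

lemma isNeg_negL [simp]: "isNeg (negL x) \<longleftrightarrow> magn x \<noteq> bot \<and> \<not> isNeg x"
  using rep_symL[of x] isNeg_magn_not_bot[of x]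
  by (auto simp: negL_def magn_def isNeg_def Abs_symL_inverse)

lemma magn_zeroL [simp]: "magn zeroL = bot"
  and isNeg_zeroL [simp]: "\<not> isNeg zeroL"
  and magn_oneL [simp]: "magn oneL = top"
  and isNeg_oneL [simp]: "\<not> isNeg oneL"
  by (simp_all add: zeroL_def oneL_def)

lemma negL_posL_bot [simp]: "negL (posL bot) = zeroL"
  by (simp add: symL_eq_iff)

lemma negL_zeroL [simp]: "negL zeroL = zeroL"
  by (simp add: negL_def)

lemma lessL_zeroL_iff: "lessL x zeroL \<longleftrightarrow> isNeg x"
  using isNeg_magn_not_bot[of x] by (auto simp: lessL_def leL_def symL_eq_iff bot_unique)

lemma zeroL_leL_iff: "leL zeroL x \<longleftrightarrow> \<not> isNeg x"
  by (auto simp: leL_def)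

lemma posPart_eq: "posPart x = (if isNeg x then bot else magn x)"
  using isNeg_magn_not_bot[of x] by (auto simp: posPart_def leL_def bot_unique)

lemma negPart_eq: "negPart x = (if isNeg x then magn x else bot)"
  using isNeg_magn_not_bot[of x] by (auto simp: negPart_def leL_def bot_unique)

lemma posPart_mono: "leL x y \<Longrightarrow> posPart x \<le> posPart y"
  by (auto simp: posPart_eq leL_def split: if_splits)

lemma negPart_antimono: "leL x y \<Longrightarrow> negPart y \<le> negPart x"
  by (auto simp: negPart_eq leL_def split: if_splits)

lemma smaxL_commute: "smaxL a b = smaxL b a"
  unfolding smaxL_def using isNeg_magn_not_bot[of a] isNeg_magn_not_bot[of b]
  by (auto simp: symL_eq_iff max_def bot_unique)

lemma smaxL_nonneg: "\<not> isNeg a \<Longrightarrow> \<not> isNeg b \<Longrightarrow> smaxL a b = posL (max (magn a) (magn b))"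
  unfolding smaxL_def using isNeg_magn_not_bot[of a] isNeg_magn_not_bot[of b]
  by (auto simp: symL_eq_iff max_def bot_unique)

lemma smaxL_nonpos:
  "isNeg a \<or> magn a = bot \<Longrightarrow> isNeg b \<or> magn b = bot \<Longrightarrow>
    smaxL a b = negL (posL (max (magn a) (magn b)))"
  unfolding smaxL_def using isNeg_magn_not_bot[of a] isNeg_magn_not_bot[of b]
  by (auto simp: symL_eq_iff max_def bot_unique)

lemma smaxL_zeroL_right [simp]: "smaxL x zeroL = x"
  unfolding smaxL_def using isNeg_magn_not_bot[of x]
  by (auto simp: symL_eq_iff max_def bot_unique)

lemma smaxL_zeroL_left [simp]: "smaxL zeroL x = x"
  using smaxL_commute[of zeroL x] by simp

lemma smaxL_negL_self: "smaxL x (negL x) = zeroL"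
  by (simp add: smaxL_def)

lemma signL_nonneg: "\<not> isNeg x \<Longrightarrow> signL x = (if magn x = bot then zeroL else oneL)"
  unfolding signL_def lessL_zeroL_iff using isNeg_magn_not_bot[of x] by (auto simp: symL_eq_iff)

lemma isNeg_signL:
  fixes x :: "'a::{linorder,order_bot,order_top} symL"
  assumes "isNeg x"
  shows "isNeg (signL x)"
proof -
  have "top \<noteq> (bot :: 'a)"
    using assms isNeg_magn_not_bot[of x] by (metis bot.extremum_uniqueI top_greatest)
  with assms show ?thesis by (simp add: signL_def lessL_zeroL_iff)
qed

lemma sminL_nonneg_posL: "\<not> isNeg x \<Longrightarrow> sminL x (posL b) = posL (min (magn x) b)"
proof (cases "signL x = signL (posL b)")
  case False
  assume "\<not> isNeg x"
  with False have "min (magn x) b = bot"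
    by (auto simp: signL_nonneg min_def bot_unique split: if_splits)
  with False show ?thesis by (simp add: sminL_def negL_def)
qed (simp add: sminL_def)

lemma sminL_neg_posL: "isNeg x \<Longrightarrow> sminL x (posL b) = negL (posL (min (magn x) b))"
  using isNeg_signL[of x] signL_nonneg[of "posL b"]
  by (auto simp: sminL_def split: if_splits)

lemma sminL_posL_zeroL [simp]: "sminL (posL a) zeroL = zeroL"
  using sminL_nonneg_posL[of "posL a" bot] by (simp add: zeroL_def)

lemma sminL_posL_negL: "sminL (posL a) (negL (posL b)) = negL (posL (min a b))"
proof (cases "b = bot")
  case False
  then have "isNeg (signL (negL (posL b)))" by (simp add: isNeg_signL)
  then have "signL (posL a) \<noteq> signL (negL (posL b))"
    using signL_nonneg[of "posL a"] by auto
  then show ?thesis by (simp add: sminL_def)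
qed simp

lemma bigjoin_le_iff: "finite A \<Longrightarrow> bigjoin g A \<le> x \<longleftrightarrow> (\<forall>a\<in>A. g a \<le> x)"
  by (auto simp: bigjoin_def)

lemma bigjoin_upper: "finite A \<Longrightarrow> a \<in> A \<Longrightarrow> g a \<le> bigjoin g A"
  by (auto simp: bigjoin_def)

lemma le_bigmeet_iff: "finite A \<Longrightarrow> x \<le> bigmeet g A \<longleftrightarrow> (\<forall>a\<in>A. x \<le> g a)"
  by (auto simp: bigmeet_def)

lemma bigmeet_lower: "finite A \<Longrightarrow> a \<in> A \<Longrightarrow> bigmeet g A \<le> g a"
  by (auto simp: bigmeet_def)

lemma bigmeet_empty [simp]: "bigmeet g {} = top"
  by (simp add: bigmeet_def)

lemma bigmeet_eq_bot: "finite A \<Longrightarrow> a \<in> A \<Longrightarrow> g a = bot \<Longrightarrow> bigmeet g A = bot"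
  using bigmeet_lower[of A a g] by (simp add: bot_unique)

lemma bigjoin_mono:
  assumes "finite A" "finite B" "\<And>a. a \<in> A \<Longrightarrow> g a = bot \<or> (\<exists>b\<in>B. g a \<le> h b)"
  shows "bigjoin g A \<le> bigjoin h B"
  unfolding bigjoin_le_iff[OF assms(1)]
  using assms(3) bigjoin_upper[OF assms(2)] order_trans by fastforce

lemma bigjoin_insert: "finite S \<Longrightarrow> bigjoin g (insert x S) = max (g x) (bigjoin g S)"
  by (auto simp: bigjoin_def max_def bot_unique)

lemma bigjoin_cong: "(\<And>a. a \<in> A \<Longrightarrow> g a = h a) \<Longrightarrow> bigjoin g A = bigjoin h A"
  unfolding bigjoin_def by (simp cong: image_cong)

lemma bigjoin_eq_bot: "finite A \<Longrightarrow> (\<And>a. a \<in> A \<Longrightarrow> g a = bot) \<Longrightarrow> bigjoin g A = bot"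
  by (simp add: bigjoin_le_iff bot_unique flip: bot_unique)

lemma bigjoin_restrict:
  assumes "finite A" "B \<subseteq> A" "\<And>a. a \<in> A - B \<Longrightarrow> g a = bot"
  shows "bigjoin g A = bigjoin g B"
proof (rule antisym)
  have "finite B" using assms(1,2) by (rule finite_subset[rotated])
  show "bigjoin g A \<le> bigjoin g B"
    by (rule bigjoin_mono) (use assms \<open>finite B\<close> in auto)
  show "bigjoin g B \<le> bigjoin g A"
    by (rule bigjoin_mono) (use assms \<open>finite B\<close> in auto)
qed

lemma SMaxL_map_nonneg:
  "\<forall>x\<in>set xs. \<not> isNeg (F x) \<Longrightarrow> SMaxL (map F xs) = posL (bigjoin (magn \<circ> F) (set xs))"
  by (induction xs) (simp_all add: SMaxL_def bigjoin_def zeroL_def smaxL_nonneg bigjoin_insert)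

lemma SMaxL_map_nonpos:
  "\<forall>x\<in>set xs. isNeg (F x) \<or> magn (F x) = bot \<Longrightarrow>
    SMaxL (map F xs) = negL (posL (bigjoin (magn \<circ> F) (set xs)))"
  by (induction xs) (simp_all add: SMaxL_def bigjoin_def smaxL_nonpos bigjoin_insert)

lemma SMaxSet_eq_SMaxL: "finite S \<Longrightarrow> \<exists>xs. set xs = S \<and> SMaxSet T S = SMaxL (map T xs)"
  unfolding SMaxSet_def
  by (metis (mono_tags, lifting) finite_distinct_list someI_ex)

lemma SMaxSet_nonneg:
  "finite S \<Longrightarrow> \<forall>A\<in>S. \<not> isNeg (T A) \<Longrightarrow> SMaxSet T S = posL (bigjoin (magn \<circ> T) S)"
  using SMaxSet_eq_SMaxL[of S T] SMaxL_map_nonneg[of _ T] by force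

lemma SMaxSet_nonpos:
  "finite S \<Longrightarrow> \<forall>A\<in>S. isNeg (T A) \<or> magn (T A) = bot \<Longrightarrow>
    SMaxSet T S = negL (posL (bigjoin (magn \<circ> T) S))"
  using SMaxSet_eq_SMaxL[of S T] SMaxL_map_nonpos[of _ T] by force

text \<open>For \<open>m = v\<close> this is the Sugeno integral (\<open>sugeno_eq_sugeno_mobius\<close>), for a
  Moebius transform \<open>m\<close> of \<open>v\<close> its Moebius representation.\<close>
definition sugeno_mobius ::
    "nat \<Rightarrow> (nat set \<Rightarrow> 'a::{linorder,order_bot,order_top}) \<Rightarrow> (nat \<Rightarrow> 'a) \<Rightarrow> 'a" where
  "sugeno_mobius n m h = bigjoin (\<lambda>A. min (m A) (bigmeet h A)) (Pow {1..n})"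

lemma sugeno_mobius_eq_chain:
  assumes v: "fuzzy_measure n v"
    and B_sub: "\<And>i. i \<in> {1..n} \<Longrightarrow> B i \<subseteq> {1..n}"
    and B_mem: "\<And>i. i \<in> {1..n} \<Longrightarrow> \<sigma> i \<in> B i"
    and B_min: "\<And>i j. i \<in> {1..n} \<Longrightarrow> j \<in> B i \<Longrightarrow> h (\<sigma> i) \<le> h j"
    and B_cover: "\<And>A. A \<subseteq> {1..n} \<Longrightarrow> A \<noteq> {} \<Longrightarrow> \<exists>i\<in>{1..n}. \<sigma> i \<in> A \<and> A \<subseteq> B i"
  shows "sugeno_mobius n v h = bigjoin (\<lambda>i. min (h (\<sigma> i)) (v (B i))) {1..n}"
  unfolding sugeno_mobius_def
proof (rule antisym; rule bigjoin_mono)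
  fix A assume A: "A \<in> Pow {1..n}"
  show "min (v A) (bigmeet h A) = bot \<or> (\<exists>i\<in>{1..n}. min (v A) (bigmeet h A) \<le> min (h (\<sigma> i)) (v (B i)))"
  proof (cases "A = {}")
    case True
    then show ?thesis using v by (simp add: fuzzy_measure_def)
  next
    case False
    then obtain i where i: "i \<in> {1..n}" "\<sigma> i \<in> A" "A \<subseteq> B i" using B_cover A by blast
    have "v A \<le> v (B i)" using v i B_sub by (auto simp: fuzzy_measure_def)
    moreover have "bigmeet h A \<le> h (\<sigma> i)" using A i by (intro bigmeet_lower) (auto intro: finite_subset)
    ultimately have "min (v A) (bigmeet h A) \<le> min (h (\<sigma> i)) (v (B i))"
      by (simp add: min.coboundedI1 min.coboundedI2)
    then show ?thesis using i(1) by blast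
  qed
next
  fix i assume i: "i \<in> {1..n}"
  have "h (\<sigma> i) \<le> bigmeet h (B i)"
    using B_sub[OF i] B_min[OF i] by (subst le_bigmeet_iff) (auto intro: finite_subset)
  then have "min (h (\<sigma> i)) (v (B i)) \<le> min (v (B i)) (bigmeet h (B i))"
    by (simp add: min.coboundedI1 min.coboundedI2)
  then show "min (h (\<sigma> i)) (v (B i)) = bot \<or> (\<exists>A\<in>Pow {1..n}. min (h (\<sigma> i)) (v (B i)) \<le> min (v A) (bigmeet h A))"
    using B_sub[OF i] by blast
qed auto

lemma lift_Suc_transp_le:
  assumes "reflp R" "transp R" "\<And>i. i \<in> {1..<n} \<Longrightarrow> R (g i) (g (Suc i))"
    and "1 \<le> i" "i \<le> k" "k \<le> n"
  shows "R (g i) (g k)"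
  using assms(5,6)
proof (induction k rule: dec_induct)
  case base
  then show ?case using assms(1) by (simp add: reflpD)
next
  case (step k)
  then have "R (g i) (g k)" "R (g k) (g (Suc k))" using assms(3,4) by auto
  then show ?case using assms(2) by (blast dest: transpD)
qed

lemma bij_betw_least_index:
  fixes \<sigma> :: "nat \<Rightarrow> nat"
  assumes "bij_betw \<sigma> {1..n} {1..n}" "A \<subseteq> {1..n}" "A \<noteq> {}"
  shows "\<exists>i\<in>{1..n}. \<sigma> i \<in> A \<and> A \<subseteq> \<sigma> ` {i..n}"
proof -
  let ?I = "{i\<in>{1..n}. \<sigma> i \<in> A}"
  have "A \<subseteq> \<sigma> ` ?I"
  proof
    fix a assume "a \<in> A"
    then obtain i where "i \<in> {1..n}" "a = \<sigma> i"
      using assms(2) bij_betw_imp_surj_on[OF assms(1)] by blast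
    with \<open>a \<in> A\<close> show "a \<in> \<sigma> ` ?I" by blast
  qed
  then have "?I \<noteq> {}" using assms(3) by auto
  then have "Min ?I \<in> ?I" by (intro Min_in) auto
  moreover have "?I \<subseteq> {Min ?I..n}" by (auto intro: Min_le)
  ultimately show ?thesis using \<open>A \<subseteq> \<sigma> ` ?I\<close> by blast
qed

lemma bij_betw_greatest_index:
  fixes \<sigma> :: "nat \<Rightarrow> nat"
  assumes "bij_betw \<sigma> {1..n} {1..n}" "A \<subseteq> {1..n}" "A \<noteq> {}"
  shows "\<exists>i\<in>{1..n}. \<sigma> i \<in> A \<and> A \<subseteq> \<sigma> ` {1..i}"
proof -
  let ?I = "{i\<in>{1..n}. \<sigma> i \<in> A}"
  have "A \<subseteq> \<sigma> ` ?I"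
  proof
    fix a assume "a \<in> A"
    then obtain i where "i \<in> {1..n}" "a = \<sigma> i"
      using assms(2) bij_betw_imp_surj_on[OF assms(1)] by blast
    with \<open>a \<in> A\<close> show "a \<in> \<sigma> ` ?I" by blast
  qed
  then have "?I \<noteq> {}" using assms(3) by auto
  then have "Max ?I \<in> ?I" by (intro Max_in) auto
  moreover have "?I \<subseteq> {1..Max ?I}" by (auto intro: Max_ge)
  ultimately show ?thesis using \<open>A \<subseteq> \<sigma> ` ?I\<close> by blast
qed

lemma sugeno_mobius_sorted:
  assumes v: "fuzzy_measure n v" and \<sigma>: "bij_betw \<sigma> {1..n} {1..n}"
    and sorted: "\<forall>i\<in>{1..<n}. h (\<sigma> i) \<le> h (\<sigma> (Suc i))"
  shows "sugeno_mobius n v h = bigjoin (\<lambda>i. min (h (\<sigma> i)) (v (\<sigma> ` {i..n}))) {1..n}"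
proof (rule sugeno_mobius_eq_chain[OF v])
  fix i assume i: "i \<in> {1..n}"
  show "\<sigma> ` {i..n} \<subseteq> {1..n}" using \<sigma> i by (auto simp: bij_betw_def)
  show "\<sigma> i \<in> \<sigma> ` {i..n}" using i by simp
  fix j assume "j \<in> \<sigma> ` {i..n}"
  then obtain k where k: "k \<in> {i..n}" "j = \<sigma> k" by blast
  show "h (\<sigma> i) \<le> h j"
    using lift_Suc_transp_le[of "(\<le>)" n "h \<circ> \<sigma>" i k] sorted i k by auto
next
  fix A assume "A \<subseteq> {1..n}" "A \<noteq> {}"
  then show "\<exists>i\<in>{1..n}. \<sigma> i \<in> A \<and> A \<subseteq> \<sigma> ` {i..n}" by (rule bij_betw_least_index[OF \<sigma>])
qed

lemma sugeno_mobius_antisorted: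
  assumes v: "fuzzy_measure n v" and \<sigma>: "bij_betw \<sigma> {1..n} {1..n}"
    and antisorted: "\<forall>i\<in>{1..<n}. h (\<sigma> (Suc i)) \<le> h (\<sigma> i)"
  shows "sugeno_mobius n v h = bigjoin (\<lambda>i. min (h (\<sigma> i)) (v (\<sigma> ` {1..i}))) {1..n}"
proof (rule sugeno_mobius_eq_chain[OF v])
  fix i assume i: "i \<in> {1..n}"
  show "\<sigma> ` {1..i} \<subseteq> {1..n}" using \<sigma> i by (auto simp: bij_betw_def)
  show "\<sigma> i \<in> \<sigma> ` {1..i}" using i by simp
  fix j assume "j \<in> \<sigma> ` {1..i}"
  then obtain k where k: "k \<in> {1..i}" "j = \<sigma> k" by blast
  show "h (\<sigma> i) \<le> h j"
    using lift_Suc_transp_le[of "(\<ge>)" n "h \<circ> \<sigma>" k i] antisorted i k by auto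
next
  fix A assume "A \<subseteq> {1..n}" "A \<noteq> {}"
  then show "\<exists>i\<in>{1..n}. \<sigma> i \<in> A \<and> A \<subseteq> \<sigma> ` {1..i}" by (rule bij_betw_greatest_index[OF \<sigma>])
qed

lemma exists_sorting_permutation:
  fixes g :: "nat \<Rightarrow> 'a::linorder"
  shows "\<exists>\<sigma>. bij_betw \<sigma> {1..n} {1..n} \<and> (\<forall>i\<in>{1..<n}. g (\<sigma> i) \<le> g (\<sigma> (Suc i)))"
proof -
  define xs where "xs = sort_key g [1..<n+1]"
  have len: "length xs = n" and set_xs: "set xs = {1..n}" and "distinct xs"
    unfolding xs_def by auto
  have sorted: "sorted (map g xs)" unfolding xs_def by simp
  define \<sigma> where "\<sigma> i = xs ! (i - 1)" for i
  have "bij_betw (\<lambda>i. xs ! i) {..<n} {1..n}"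
    using bij_betw_nth[OF \<open>distinct xs\<close> refl refl] len set_xs by simp
  moreover have "bij_betw (\<lambda>i. i - 1) {1..n} {..<n}"
    by (rule bij_betw_byWitness[where f'="\<lambda>i. i + 1"]) auto
  ultimately have "bij_betw \<sigma> {1..n} {1..n}"
    unfolding \<sigma>_def using bij_betw_trans by (fastforce simp: comp_def)
  moreover have "g (\<sigma> i) \<le> g (\<sigma> (Suc i))" if "i \<in> {1..<n}" for i
    using sorted that len by (auto simp: \<sigma>_def sorted_iff_nth_mono)
  ultimately show ?thesis by blast
qed

lemma sugeno_eq_sugeno_mobius:
  assumes "fuzzy_measure n v"
  shows "sugeno n v h = sugeno_mobius n v h"
proof -
  define \<sigma> where
    "\<sigma> = (SOME \<sigma>. bij_betw \<sigma> {1..n} {1..n} \<and> (\<forall>i\<in>{1..<n}. h (\<sigma> i) \<le> h (\<sigma> (Suc i))))"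
  have \<sigma>: "bij_betw \<sigma> {1..n} {1..n} \<and> (\<forall>i\<in>{1..<n}. h (\<sigma> i) \<le> h (\<sigma> (Suc i)))"
    unfolding \<sigma>_def using exists_sorting_permutation[of n h] by (rule someI_ex)
  have "sugeno n v h = bigjoin (\<lambda>i. min (h (\<sigma> i)) (v (\<sigma> ` {i..n}))) {1..n}"
    unfolding sugeno_def \<sigma>_def Let_def ..
  also have "\<dots> = sugeno_mobius n v h"
    using \<sigma> by (intro sugeno_mobius_sorted[OF assms, symmetric]) blast+
  finally show ?thesis .
qed

lemma fuzzy_measure_exists_minimal_subset:
  assumes v: "fuzzy_measure n v"
  shows "A \<subseteq> {1..n} \<Longrightarrow> \<exists>C\<subseteq>A. v C = v A \<and> (\<forall>j\<in>C. v (C - {j}) < v C)"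
proof (induction "card A" arbitrary: A rule: less_induct)
  case less
  show ?case
  proof (cases "\<forall>j\<in>A. v (A - {j}) < v A")
    case True
    then show ?thesis by blast
  next
    case False
    then obtain j where j: "j \<in> A" "\<not> v (A - {j}) < v A" by blast
    have "v (A - {j}) \<le> v A" using v less.prems by (auto simp: fuzzy_measure_def)
    with j(2) have same: "v (A - {j}) = v A" by simp
    have "finite A" using less.prems by (rule finite_subset) simp
    then have "card (A - {j}) < card A" using j(1) by (rule card_Diff1_less)
    moreover have "A - {j} \<subseteq> {1..n}" using less.prems by blast
    ultimately obtain C where "C \<subseteq> A - {j}" "v C = v (A - {j})" "\<forall>j\<in>C. v (C - {j}) < v C"
      using less.hyps by meson
    with same show ?thesis by (intro exI[of _ C]) auto
  qed
qed

text \<open>Only \<open>m\<^sub>* \<le> m \<le> m\<^sup>*\<close> matters: \<open>m \<le> v\<close> gives one inequality,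
  and \<open>m\<^sub>*(C) = v(C) = v(A)\<close> on the minimal subset \<open>C \<subseteq> A\<close> the other.\<close>
lemma sugeno_mobius_transform:
  assumes v: "fuzzy_measure n v" and m: "mobius_transform n v m"
  shows "sugeno_mobius n m h = sugeno_mobius n v h"
  unfolding sugeno_mobius_def
proof (rule antisym; rule bigjoin_mono)
  fix A assume A: "A \<in> Pow {1..n}"
  then have "m A \<le> v A" using m unfolding mobius_transform_def mobius_upper_def by blast
  then have "min (m A) (bigmeet h A) \<le> min (v A) (bigmeet h A)" by (rule min.mono) simp
  then show "min (m A) (bigmeet h A) = bot \<or> (\<exists>B\<in>Pow {1..n}. min (m A) (bigmeet h A) \<le> min (v B) (bigmeet h B))"
    using A by (intro disjI2 bexI)
next
  fix A assume A: "A \<in> Pow {1..n}"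
  then obtain C where C: "C \<subseteq> A" "v C = v A" "\<forall>j\<in>C. v (C - {j}) < v C"
    using fuzzy_measure_exists_minimal_subset[OF v, of A] by auto
  have "C \<subseteq> {1..n}" using A C(1) by blast
  then have "mobius_lower v C \<le> m C" using m unfolding mobius_transform_def by blast
  moreover have "mobius_lower v C = v A" using C(2,3) unfolding mobius_lower_def by simp
  ultimately have "v A \<le> m C" by simp
  moreover have "bigmeet h A \<le> bigmeet h C"
  proof -
    have "finite A" using A by (auto intro: finite_subset[OF _ finite_atLeastAtMost])
    then show ?thesis
      using C(1) finite_subset[OF C(1)] by (auto simp: le_bigmeet_iff intro: bigmeet_lower)
  qed
  ultimately have "min (v A) (bigmeet h A) \<le> min (m C) (bigmeet h C)" by (rule min.mono)
  then show "min (v A) (bigmeet h A) = bot \<or> (\<exists>B\<in>Pow {1..n}. min (v A) (bigmeet h A) \<le> min (m B) (bigmeet h B))"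
    using A C(1) by (intro disjI2 bexI[of _ C]) auto
qed auto

lemma sugeno_mobius_restrict:
  assumes "N \<subseteq> {1..n}" "\<And>i. i \<in> {1..n} - N \<Longrightarrow> h i = bot"
  shows "sugeno_mobius n m h = bigjoin (\<lambda>A. min (m A) (bigmeet h A)) {A. A \<subseteq> N}"
  unfolding sugeno_mobius_def
proof (rule bigjoin_restrict)
  fix A assume "A \<in> Pow {1..n} - {A. A \<subseteq> N}"
  then obtain i where i: "i \<in> A" "i \<in> {1..n} - N" by blast
  have "finite A"
    using \<open>A \<in> Pow {1..n} - _\<close> by (auto intro: finite_subset[OF _ finite_atLeastAtMost])
  then have "bigmeet h A = bot" using i(1) assms(2)[OF i(2)] by (rule bigmeet_eq_bot)
  then show "min (m A) (bigmeet h A) = bot" by simp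
qed (use assms(1) in auto)

lemma sym_sugeno_sorted:
  fixes v :: "nat set \<Rightarrow> 'a::{linorder,order_bot,order_top}" and f :: "nat \<Rightarrow> 'a symL"
  assumes v: "fuzzy_measure n v" and \<sigma>: "bij_betw \<sigma> {1..n} {1..n}" and "p \<le> n"
    and sorted: "\<forall>i\<in>{1..<n}. leL (f (\<sigma> i)) (f (\<sigma> (Suc i)))"
    and neg: "\<forall>i\<in>{1..p}. lessL (f (\<sigma> i)) zeroL"
    and nonneg: "\<forall>i\<in>{p+1..n}. leL zeroL (f (\<sigma> i))"
  shows "sym_sugeno n v f =
          smaxL (SMaxL (map (\<lambda>i. sminL (f (\<sigma> i)) (posL (v (\<sigma> ` {1..i})))) [1..<p+1]))
                (SMaxL (map (\<lambda>i. sminL (f (\<sigma> i)) (posL (v (\<sigma> ` {i..n})))) [p+1..<n+1]))"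
proof -
  let ?F_neg = "\<lambda>i. sminL (f (\<sigma> i)) (posL (v (\<sigma> ` {1..i})))"
  let ?F_pos = "\<lambda>i. sminL (f (\<sigma> i)) (posL (v (\<sigma> ` {i..n})))"
  have neg: "isNeg (f (\<sigma> i))" if "i \<in> {1..p}" for i
    using neg that by (simp add: lessL_zeroL_iff)
  have nonneg: "\<not> isNeg (f (\<sigma> i))" if "i \<in> {p+1..n}" for i
    using nonneg that by (simp add: zeroL_leL_iff)
  have pos_sorted: "\<forall>i\<in>{1..<n}. posPart (f (\<sigma> i)) \<le> posPart (f (\<sigma> (Suc i)))"
    using sorted posPart_mono by blast
  have neg_antisorted: "\<forall>i\<in>{1..<n}. negPart (f (\<sigma> (Suc i))) \<le> negPart (f (\<sigma> i))"
    using sorted negPart_antimono by blast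
  have "sugeno n v (\<lambda>i. posPart (f i))
      = bigjoin (\<lambda>i. min (posPart (f (\<sigma> i))) (v (\<sigma> ` {i..n}))) {1..n}"
    by (simp add: sugeno_eq_sugeno_mobius[OF v] sugeno_mobius_sorted[OF v \<sigma> pos_sorted])
  also have "\<dots> = bigjoin (\<lambda>i. min (posPart (f (\<sigma> i))) (v (\<sigma> ` {i..n}))) {p+1..n}"
    by (rule bigjoin_restrict) (auto simp: posPart_eq neg)
  also have "\<dots> = bigjoin (magn \<circ> ?F_pos) (set [p+1..<n+1])"
    by (simp only: set_upt atLeastLessThanSuc_atLeastAtMost Suc_eq_plus1[symmetric])
      (rule bigjoin_cong, simp add: nonneg sminL_nonneg_posL posPart_eq)
  finally have pos_part: "posL (sugeno n v (\<lambda>i. posPart (f i))) = SMaxL (map ?F_pos [p+1..<n+1])"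
    using nonneg by (subst SMaxL_map_nonneg) (auto simp: sminL_nonneg_posL)
  have "sugeno n v (\<lambda>i. negPart (f i))
      = bigjoin (\<lambda>i. min (negPart (f (\<sigma> i))) (v (\<sigma> ` {1..i}))) {1..n}"
    by (simp add: sugeno_eq_sugeno_mobius[OF v] sugeno_mobius_antisorted[OF v \<sigma> neg_antisorted])
  also have "\<dots> = bigjoin (\<lambda>i. min (negPart (f (\<sigma> i))) (v (\<sigma> ` {1..i}))) {1..p}"
    using \<open>p \<le> n\<close> by (intro bigjoin_restrict) (auto simp: negPart_eq nonneg)
  also have "\<dots> = bigjoin (magn \<circ> ?F_neg) (set [1..<p+1])"
    by (simp only: set_upt atLeastLessThanSuc_atLeastAtMost Suc_eq_plus1[symmetric])
      (rule bigjoin_cong, simp add: neg sminL_neg_posL negPart_eq)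
  finally have neg_part: "negL (posL (sugeno n v (\<lambda>i. negPart (f i)))) = SMaxL (map ?F_neg [1..<p+1])"
    using neg by (subst SMaxL_map_nonpos) (auto simp: sminL_neg_posL)
  show ?thesis
    unfolding sym_sugeno_def pos_part neg_part by (rule smaxL_commute)
qed

definition mobius_term ::
    "(nat set \<Rightarrow> 'a::{linorder,order_bot,order_top}) \<Rightarrow> (nat \<Rightarrow> 'a symL) \<Rightarrow> nat set \<Rightarrow> 'a symL" where
  "mobius_term m f A = sminL (posL (m A))
     (smaxL (posL (bigmeet (\<lambda>i. posPart (f i)) A)) (negL (posL (bigmeet (\<lambda>i. negPart (f i)) A))))"

lemma mobius_transform_empty:
  assumes "fuzzy_measure n v" "mobius_transform n v m"
  shows "m {} = bot"
  using assms unfolding mobius_transform_def mobius_upper_def fuzzy_measure_def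
  by (metis bot.extremum_uniqueI empty_subsetI)

lemma mobius_term_empty: "m {} = bot \<Longrightarrow> mobius_term m f {} = zeroL"
  by (simp add: mobius_term_def smaxL_negL_self)

lemma mobius_term_nonneg:
  assumes "m {} = bot" "finite A" "\<forall>i\<in>A. \<not> isNeg (f i)"
  shows "mobius_term m f A = posL (min (m A) (bigmeet (\<lambda>i. posPart (f i)) A))"
proof (cases "A = {}")
  case False
  then obtain a where "a \<in> A" by blast
  with assms(2,3) have "bigmeet (\<lambda>i. negPart (f i)) A = bot"
    by (intro bigmeet_eq_bot) (auto simp: negPart_eq)
  then show ?thesis by (simp add: mobius_term_def sminL_nonneg_posL)
qed (use assms(1) mobius_term_empty in \<open>simp add: zeroL_def\<close>)

lemma mobius_term_neg:
  assumes "m {} = bot" "finite A" "\<forall>i\<in>A. isNeg (f i)"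
  shows "mobius_term m f A = negL (posL (min (m A) (bigmeet (\<lambda>i. negPart (f i)) A)))"
proof (cases "A = {}")
  case False
  then obtain a where "a \<in> A" by blast
  with assms(2,3) have "bigmeet (\<lambda>i. posPart (f i)) A = bot"
    by (intro bigmeet_eq_bot) (auto simp: posPart_eq)
  then show ?thesis by (simp add: mobius_term_def sminL_posL_negL flip: zeroL_def)
qed (use assms(1) mobius_term_empty in simp)

lemma mobius_term_mixed:
  assumes "finite A" "a \<in> A" "\<not> isNeg (f a)" "b \<in> A" "isNeg (f b)"
  shows "mobius_term m f A = zeroL"
proof -
  have "bigmeet (\<lambda>i. negPart (f i)) A = bot"
    using assms(1,2) by (rule bigmeet_eq_bot) (simp add: negPart_eq assms(3))
  moreover have "bigmeet (\<lambda>i. posPart (f i)) A = bot"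
    using assms(1,4) by (rule bigmeet_eq_bot) (simp add: posPart_eq assms(5))
  ultimately show ?thesis by (simp add: mobius_term_def flip: zeroL_def)
qed

lemma sym_sugeno_mobius:
  fixes v :: "nat set \<Rightarrow> 'a::{linorder,order_bot,order_top}" and f :: "nat \<Rightarrow> 'a symL"
  assumes v: "fuzzy_measure n v" and m: "mobius_transform n v m"
  defines "Npos \<equiv> {i\<in>{1..n}. leL zeroL (f i)}" and "Nneg \<equiv> {1..n} - {i\<in>{1..n}. leL zeroL (f i)}"
  shows "sym_sugeno n v f =
           smaxL (smaxL (SMaxSet (mobius_term m f) {A. A \<subseteq> Npos})
                        (SMaxSet (mobius_term m f) {A. A \<subseteq> Nneg}))
                 (SMaxSet (mobius_term m f) {A. A \<subseteq> {1..n} \<and> A \<inter> Npos \<noteq> {} \<and> A \<inter> Nneg \<noteq> {}})"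
proof -
  define f\<^sub>p where "f\<^sub>p = (\<lambda>i. posPart (f i))"
  define f\<^sub>n where "f\<^sub>n = (\<lambda>i. negPart (f i))"
  define T where "T = mobius_term m f"
  have Npos_iff: "i \<in> Npos \<longleftrightarrow> i \<in> {1..n} \<and> \<not> isNeg (f i)" for i
    by (simp add: Npos_def zeroL_leL_iff)
  have Nneg_iff: "i \<in> Nneg \<longleftrightarrow> i \<in> {1..n} \<and> isNeg (f i)" for i
    by (auto simp: Nneg_def Npos_def zeroL_leL_iff)
  have sub: "Npos \<subseteq> {1..n}" "Nneg \<subseteq> {1..n}" by (auto simp: Npos_def Nneg_def)
  then have fin: "finite Npos" "finite Nneg" by (auto intro: finite_subset)
  note m_empty = mobius_transform_empty[OF v m]
  have T_nonneg: "T A = posL (min (m A) (bigmeet f\<^sub>p A))" if "A \<subseteq> Npos" for A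
    unfolding T_def f\<^sub>p_def
    by (rule mobius_term_nonneg[where m=m, OF m_empty finite_subset[OF that fin(1)]])
      (use that in \<open>auto simp: Npos_iff\<close>)
  have T_neg: "T A = negL (posL (min (m A) (bigmeet f\<^sub>n A)))" if "A \<subseteq> Nneg" for A
    unfolding T_def f\<^sub>n_def
    by (rule mobius_term_neg[where m=m, OF m_empty finite_subset[OF that fin(2)]])
      (use that in \<open>auto simp: Nneg_iff\<close>)
  have T_mixed: "T A = zeroL" if A: "A \<subseteq> {1..n}" "A \<inter> Npos \<noteq> {}" "A \<inter> Nneg \<noteq> {}" for A
  proof -
    obtain a b where "a \<in> A \<inter> Npos" "b \<in> A \<inter> Nneg" using A by blast
    moreover have "finite A" using A(1) by (rule finite_subset) simp
    ultimately show ?thesis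
      unfolding T_def by (intro mobius_term_mixed[of A a f b]) (auto simp: Npos_iff Nneg_iff)
  qed
  have "SMaxSet T {A. A \<subseteq> Npos} = posL (bigjoin (magn \<circ> T) {A. A \<subseteq> Npos})"
    using fin by (intro SMaxSet_nonneg) (auto simp: T_nonneg)
  also have "\<dots> = posL (bigjoin (\<lambda>A. min (m A) (bigmeet f\<^sub>p A)) {A. A \<subseteq> Npos})"
    by (intro arg_cong[where f=posL] bigjoin_cong) (simp add: T_nonneg)
  also have "\<dots> = posL (sugeno n v f\<^sub>p)"
    using sugeno_mobius_restrict[OF sub(1), of f\<^sub>p m]
    by (simp add: Npos_iff f\<^sub>p_def posPart_eq sugeno_mobius_transform[OF v m] sugeno_eq_sugeno_mobius[OF v])
  finally have pos_part: "SMaxSet T {A. A \<subseteq> Npos} = posL (sugeno n v f\<^sub>p)" .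
  have "SMaxSet T {A. A \<subseteq> Nneg} = negL (posL (bigjoin (magn \<circ> T) {A. A \<subseteq> Nneg}))"
    using fin by (intro SMaxSet_nonpos) (auto simp: T_neg)
  also have "\<dots> = negL (posL (bigjoin (\<lambda>A. min (m A) (bigmeet f\<^sub>n A)) {A. A \<subseteq> Nneg}))"
    by (intro arg_cong[where f=negL] arg_cong[where f=posL] bigjoin_cong) (simp add: T_neg)
  also have "\<dots> = negL (posL (sugeno n v f\<^sub>n))"
    using sugeno_mobius_restrict[OF sub(2), of f\<^sub>n m]
    by (simp add: Nneg_iff f\<^sub>n_def negPart_eq sugeno_mobius_transform[OF v m] sugeno_eq_sugeno_mobius[OF v])
  finally have neg_part: "SMaxSet T {A. A \<subseteq> Nneg} = negL (posL (sugeno n v f\<^sub>n))" .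
  have "SMaxSet T {A. A \<subseteq> {1..n} \<and> A \<inter> Npos \<noteq> {} \<and> A \<inter> Nneg \<noteq> {}}
      = posL (bigjoin (magn \<circ> T) {A. A \<subseteq> {1..n} \<and> A \<inter> Npos \<noteq> {} \<and> A \<inter> Nneg \<noteq> {}})"
    by (intro SMaxSet_nonneg) (auto simp: T_mixed)
  also have "\<dots> = zeroL"
    by (subst bigjoin_eq_bot) (auto simp: T_mixed zeroL_def)
  finally have mixed_part: "SMaxSet T {A. A \<subseteq> {1..n} \<and> A \<inter> Npos \<noteq> {} \<and> A \<inter> Nneg \<noteq> {}} = zeroL" .
  show ?thesis
    unfolding T_def[symmetric] pos_part neg_part mixed_part sym_sugeno_def smaxL_zeroL_right
      f\<^sub>p_def f\<^sub>n_def ..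
qed

theorem proposition4:
  fixes n :: nat and v :: "nat set \<Rightarrow> 'a::{linorder,order_bot,order_top}"
    and f :: "nat \<Rightarrow> 'a symL"
  assumes "fuzzy_measure n v"
  shows
    "(\<forall>(\<sigma>::nat \<Rightarrow> nat) p.
        bij_betw \<sigma> {1..n} {1..n} \<and> p \<le> n \<and>
        (\<forall>i\<in>{1..<n}. leL (f (\<sigma> i)) (f (\<sigma> (Suc i)))) \<and>
        (\<forall>i\<in>{1..p}. lessL (f (\<sigma> i)) zeroL) \<and>
        (\<forall>i\<in>{p+1..n}. leL zeroL (f (\<sigma> i)))
      \<longrightarrow> sym_sugeno n v f =
          smaxL (SMaxL (map (\<lambda>i. sminL (f (\<sigma> i)) (posL (v (\<sigma> ` {1..i})))) [1..<p+1]))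
                (SMaxL (map (\<lambda>i. sminL (f (\<sigma> i)) (posL (v (\<sigma> ` {i..n})))) [p+1..<n+1])))
     \<and>
     (\<forall>m. mobius_transform n v m \<longrightarrow>
        (let Npos = {i\<in>{1..n}. leL zeroL (f i)};
             Nneg = {1..n} - Npos;
             T = (\<lambda>A. sminL (posL (m A))
                        (smaxL (posL (bigmeet (\<lambda>i. posPart (f i)) A))
                               (negL (posL (bigmeet (\<lambda>i. negPart (f i)) A)))))
         in sym_sugeno n v f =
            smaxL (smaxL (SMaxSet T {A. A \<subseteq> Npos}) (SMaxSet T {A. A \<subseteq> Nneg}))
                  (SMaxSet T {A. A \<subseteq> {1..n} \<and> A \<inter> Npos \<noteq> {} \<and> A \<inter> Nneg \<noteq> {}})))"
proof (intro conjI allI impI, goal_cases)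
  case (1 \<sigma> p)
  then show ?case by (elim conjE) (rule sym_sugeno_sorted[OF assms])
next
  case (2 m)
  then show ?case
    unfolding Let_def mobius_term_def[symmetric, abs_def] by (rule sym_sugeno_mobius[OF assms])
qed

end
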